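(* The homogeneous Finsler space $(G/H,F)$ is naturally reductive (with respect to $\mathfrak g=\mathfrak h+\mathfrak m$) if and only if $[u,A_u(u)]=0$ for every nonzero $u\in\mathfrak m$.
   Context: $G$ is a compact connected semisimple Lie group, $H$ a closed subgroup, $Q=-B$ with $B$ the Killing form of $\mathfrak g$, $\mathfrak m$ the $Q$-orthogonal complement of $\mathfrak h$, identified with $T_{eH}(G/H)$; for $X\in\mathfrak g$, $X_{\mathfrak m}$ is its $\mathfrak m$-component. A $G$-invariant Finsler metric $F$ corresponds to an $\mathrm{Ad}(H)$-invariant Minkowski norm on $\mathfrak m$ with fundamental tensor $g_y(u,v)=\frac12\frac{\partial^2}{\partial s\partial t}F^2(y+su+tv)|_{s=t=0}$. For $y\neq0$, the metric operator $A_y$ is defined by $g_y(u,v)=Q(A_y(u),v)$. $(G/H,F)$ is naturally reductive if $g_u(u,[u,v]_{\mathfrak m})=0$ for all nonzero $u\in\mathfrak m$ and all $v\in\mathfrak m$. *)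

theory Defs
  imports "HOL-Analysis.Analysis"
begin

text \<open>Lie-algebraic model of a homogeneous Finsler space G/H with G compact connected
semisimple.\<close>

definition lie_bracket :: "('g::euclidean_space \<Rightarrow> 'g \<Rightarrow> 'g) \<Rightarrow> bool" where
  "lie_bracket br \<longleftrightarrow> (\<forall>x. linear (br x)) \<and> (\<forall>y. linear (\<lambda>x. br x y))
     \<and> (\<forall>x. br x x = 0)
     \<and> (\<forall>x y z. br x (br y z) + br y (br z x) + br z (br x y) = 0)"

definition lin_trace :: "('g::euclidean_space \<Rightarrow> 'g) \<Rightarrow> real" where
  "lin_trace f = (\<Sum>b\<in>Basis. f b \<bullet> b)"

definition killing :: "('g::euclidean_space \<Rightarrow> 'g \<Rightarrow> 'g) \<Rightarrow> 'g \<Rightarrow> 'g \<Rightarrow> real" where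
  "killing br x y = lin_trace (\<lambda>z. br x (br y z))"

definition lin_exp :: "('g::euclidean_space \<Rightarrow> 'g) \<Rightarrow> 'g \<Rightarrow> 'g" where
  "lin_exp L = (\<lambda>x. \<Sum>k. (1 / fact k) *\<^sub>R (L ^^ k) x)"

text \<open>Ad(H) is a closed subgroup of Int(g) = {exp(ad X)} (the adjoint group of the compact
semisimple g), consisting of Lie algebra automorphisms.\<close>
definition closed_adjoint_subgroup :: "('g::euclidean_space \<Rightarrow> 'g \<Rightarrow> 'g) \<Rightarrow> ('g \<Rightarrow> 'g) set \<Rightarrow> bool" where
  "closed_adjoint_subgroup br AdH \<longleftrightarrow>
     id \<in> AdH
   \<and> (\<forall>k\<in>AdH. linear k \<and> bij k \<and> (\<forall>x y. k (br x y) = br (k x) (k y)))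
   \<and> (\<forall>k\<in>AdH. \<forall>l\<in>AdH. k \<circ> l \<in> AdH)
   \<and> (\<forall>k\<in>AdH. inv k \<in> AdH)
   \<and> (\<forall>k\<in>AdH. \<exists>X. k = lin_exp (br X))
   \<and> (\<forall>K k. (\<forall>n. K n \<in> AdH) \<longrightarrow> linear k \<longrightarrow> (\<forall>x. (\<lambda>n. K n x) \<longlonglongrightarrow> k x) \<longrightarrow> k \<in> AdH)"

text \<open>Lie algebra of Ad(H) (pulled back via ad): h = {X. exp(t ad X) \<in> Ad(H) for all t}.\<close>
definition lie_alg_of :: "('g::euclidean_space \<Rightarrow> 'g \<Rightarrow> 'g) \<Rightarrow> ('g \<Rightarrow> 'g) set \<Rightarrow> 'g set" where
  "lie_alg_of br AdH = {X. \<forall>t::real. lin_exp (\<lambda>y. t *\<^sub>R br X y) \<in> AdH}"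

definition Qform :: "('g::euclidean_space \<Rightarrow> 'g \<Rightarrow> 'g) \<Rightarrow> 'g \<Rightarrow> 'g \<Rightarrow> real" where
  "Qform br x y = - killing br x y"

definition mcompl :: "('g::euclidean_space \<Rightarrow> 'g \<Rightarrow> 'g) \<Rightarrow> 'g set \<Rightarrow> 'g set" where
  "mcompl br h = {v. \<forall>x\<in>h. Qform br x v = 0}"

definition mpart :: "('g::euclidean_space \<Rightarrow> 'g \<Rightarrow> 'g) \<Rightarrow> 'g set \<Rightarrow> 'g \<Rightarrow> 'g" where
  "mpart br h X = (THE w. w \<in> mcompl br h \<and> X - w \<in> h)"

fun higher_dirderivs :: "nat \<Rightarrow> ('g::euclidean_space \<Rightarrow> real) \<Rightarrow> ('g \<Rightarrow> real) set" where
  "higher_dirderivs 0 f = {f}"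
| "higher_dirderivs (Suc k) f =
     {(\<lambda>x. frechet_derivative g (at x) v) | g v. g \<in> higher_dirderivs k f}"

definition smooth_on :: "'g::euclidean_space set \<Rightarrow> ('g \<Rightarrow> real) \<Rightarrow> bool" where
  "smooth_on S f \<longleftrightarrow> (\<forall>k. \<forall>g\<in>higher_dirderivs k f. g differentiable_on S)"

definition fund_tensor :: "('g::euclidean_space \<Rightarrow> real) \<Rightarrow> 'g \<Rightarrow> 'g \<Rightarrow> 'g \<Rightarrow> real" where
  "fund_tensor F y u v =
     (1/2) * deriv (\<lambda>s. deriv (\<lambda>t. (F (y + s *\<^sub>R u + t *\<^sub>R v))\<^sup>2) 0) 0"

text \<open>Minkowski norm on the subspace m (F only matters on m).\<close>
definition minkowski_norm_on :: "'g::euclidean_space set \<Rightarrow> ('g \<Rightarrow> real) \<Rightarrow> bool" where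
  "minkowski_norm_on m F \<longleftrightarrow>
     (\<forall>y\<in>m. F y \<ge> 0) \<and> (\<forall>y\<in>m. y \<noteq> 0 \<longrightarrow> F y > 0)
   \<and> (\<forall>y\<in>m. \<forall>c>0. F (c *\<^sub>R y) = c * F y)
   \<and> (\<exists>S Fe. open S \<and> m - {0} \<subseteq> S \<and> smooth_on S Fe \<and> (\<forall>y\<in>m. Fe y = F y))
   \<and> (\<forall>y\<in>m - {0}. \<forall>u\<in>m - {0}. fund_tensor F y u u > 0)"

definition metric_op :: "('g::euclidean_space \<Rightarrow> 'g \<Rightarrow> 'g) \<Rightarrow> 'g set \<Rightarrow> ('g \<Rightarrow> real) \<Rightarrow> 'g \<Rightarrow> 'g \<Rightarrow> 'g" where
  "metric_op br m F y u = (THE w. w \<in> m \<and> (\<forall>v\<in>m. fund_tensor F y u v = Qform br w v))"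

definition naturally_reductive :: "('g::euclidean_space \<Rightarrow> 'g \<Rightarrow> 'g) \<Rightarrow> 'g set \<Rightarrow> ('g \<Rightarrow> real) \<Rightarrow> bool" where
  "naturally_reductive br h F \<longleftrightarrow>
     (\<forall>u\<in>mcompl br h - {0}. \<forall>v\<in>mcompl br h.
        fund_tensor F u u (mpart br h (br u v)) = 0)"

end

theory Submission
  imports Defs
begin

text \<open>
  For \<open>u \<in> m - {0}\<close>, positive homogeneity of \<open>F\<close> gives \<open>g\<^sub>u(u, v) = F(u) dF\<^sub>u(v)\<close>, so \<open>A\<^sub>u(u)\<close> is
  the \<open>Q\<close>-dual of \<open>F(u) dF\<^sub>u\<close> on \<open>m\<close>, and the ad-invariance of \<open>Q\<close> turns
  \<open>g\<^sub>u(u, [u, v]\<^sub>m)\<close> into \<open>-Q([u, A\<^sub>u(u)], v)\<close>. Natural reductivity therefore says that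
  \<open>[u, A\<^sub>u(u)]\<close> is \<open>Q\<close>-orthogonal to \<open>m\<close>. It is always \<open>Q\<close>-orthogonal to \<open>h\<close>:
  differentiating \<open>F(exp(t ad x) u) = F(u)\<close> at \<open>t = 0\<close> gives \<open>dF\<^sub>u([x, u]) = 0\<close> for \<open>x \<in> h\<close>.
  As \<open>Q\<close> is positive definite, \<open>[u, A\<^sub>u(u)] = 0\<close>. For the \<open>m\<close>-component to be well defined,
  \<open>h\<close> must be a subspace; closure under addition comes from the Lie product formula
  and the closedness of \<open>Ad(H)\<close>.
\<close>

text \<open>Bounded linear endomorphisms form a Banach algebra under composition; giving them a type
  of their own makes the library's \<open>exp\<close> available for \<open>exp (t ad X)\<close>.\<close>

typedef (overloaded) 'a endo = "UNIV :: ('a::euclidean_space \<Rightarrow>\<^sub>L 'a) set"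
  morphisms blinfun_of_endo endo_of_blinfun by auto

setup_lifting type_definition_endo

instantiation endo :: (euclidean_space) real_normed_algebra_1
begin
lift_definition zero_endo :: "'a endo" is 0 .
lift_definition one_endo :: "'a endo" is id_blinfun .
lift_definition plus_endo :: "'a endo \<Rightarrow> 'a endo \<Rightarrow> 'a endo" is "(+)" .
lift_definition minus_endo :: "'a endo \<Rightarrow> 'a endo \<Rightarrow> 'a endo" is "(-)" .
lift_definition uminus_endo :: "'a endo \<Rightarrow> 'a endo" is "uminus" .
lift_definition times_endo :: "'a endo \<Rightarrow> 'a endo \<Rightarrow> 'a endo" is "(o\<^sub>L)" .
lift_definition scaleR_endo :: "real \<Rightarrow> 'a endo \<Rightarrow> 'a endo" is "scaleR" .
lift_definition norm_endo :: "'a endo \<Rightarrow> real" is norm .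
lift_definition dist_endo :: "'a endo \<Rightarrow> 'a endo \<Rightarrow> real" is dist .
definition sgn_endo :: "'a endo \<Rightarrow> 'a endo" where "sgn_endo x = scaleR (inverse (norm x)) x"
definition uniformity_endo :: "('a endo \<times> 'a endo) filter" where
  "uniformity_endo = (INF e\<in>{0<..}. principal {(x, y). dist x y < e})"
definition open_endo :: "'a endo set \<Rightarrow> bool" where
  "open_endo U = (\<forall>x\<in>U. \<forall>\<^sub>F (x', y) in uniformity. x' = x \<longrightarrow> y \<in> U)"
instance
  apply intro_classes
  apply (simp_all only: uniformity_endo_def open_endo_def sgn_endo_def)
  apply (transfer; simp add: algebra_simps dist_norm norm_triangle_ineq norm_blinfun_compose blinfun_eqI; fail)+
  apply (transfer; rule blinfun_eqI; simp add: blinfun.bilinear_simps; fail)+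
  subgoal by (metis norm_blinfun_id norm_zero zero_neq_one zero_endo.rep_eq one_endo.rep_eq)
  subgoal by (simp add: dist_endo.rep_eq norm_endo.rep_eq minus_endo.rep_eq dist_norm)
  subgoal by (metis norm_endo.rep_eq zero_endo.rep_eq blinfun_of_endo_inject norm_eq_zero)
  subgoal by (simp add: norm_endo.rep_eq plus_endo.rep_eq norm_triangle_ineq)
  subgoal by (simp add: norm_endo.rep_eq scaleR_endo.rep_eq)
  subgoal by (simp add: norm_endo.rep_eq times_endo.rep_eq norm_blinfun_compose)
  subgoal by (simp add: norm_endo.rep_eq one_endo.rep_eq)
  done
end

instance endo :: (euclidean_space) banach
proof
  fix X :: "nat \<Rightarrow> 'a endo"
  assume "Cauchy X"
  then have "Cauchy (\<lambda>n. blinfun_of_endo (X n))"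
    by (simp add: Cauchy_def dist_endo.rep_eq)
  then obtain L where "(\<lambda>n. blinfun_of_endo (X n)) \<longlonglongrightarrow> L"
    using convergent_eq_Cauchy by blast
  then have "X \<longlonglongrightarrow> endo_of_blinfun L"
    by (simp add: LIMSEQ_def dist_endo.rep_eq endo_of_blinfun_inverse)
  then show "convergent X" by (auto simp: convergent_def)
qed

definition endo_apply :: "'a::euclidean_space endo \<Rightarrow> 'a \<Rightarrow> 'a" where
  "endo_apply E = blinfun_apply (blinfun_of_endo E)"

definition endo_of :: "('a::euclidean_space \<Rightarrow> 'a) \<Rightarrow> 'a endo" where
  "endo_of L = endo_of_blinfun (Blinfun L)"

lemma endo_apply_endo_of: "linear L \<Longrightarrow> endo_apply (endo_of L) = L"
  unfolding endo_apply_def endo_of_def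
  by (simp add: endo_of_blinfun_inverse bounded_linear_Blinfun_apply linear_conv_bounded_linear)

lemma endo_eqI: "(\<And>x. endo_apply A x = endo_apply B x) \<Longrightarrow> A = B"
  unfolding endo_apply_def by (metis blinfun_eqI blinfun_of_endo_inject)

lemma endo_apply_one: "endo_apply 1 = id"
  by (auto simp: endo_apply_def one_endo.rep_eq)

lemma endo_apply_mult: "endo_apply (A * B) = endo_apply A \<circ> endo_apply B"
  by (auto simp: endo_apply_def times_endo.rep_eq)

lemma endo_apply_add: "endo_apply (A + B) x = endo_apply A x + endo_apply B x"
  by (simp add: endo_apply_def plus_endo.rep_eq blinfun.add_left)

lemma endo_apply_zero: "endo_apply 0 x = 0"
  by (simp add: endo_apply_def zero_endo.rep_eq)

lemma endo_apply_scaleR: "endo_apply (c *\<^sub>R A) x = c *\<^sub>R endo_apply A x"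
  by (simp add: endo_apply_def scaleR_endo.rep_eq blinfun.scaleR_left)

lemma endo_apply_power: "endo_apply (A ^ n) = endo_apply A ^^ n"
  by (induction n) (simp_all add: endo_apply_one endo_apply_mult)

lemma linear_endo_apply: "linear (endo_apply A)"
  unfolding endo_apply_def by (simp add: bounded_linear.linear blinfun.bounded_linear_right)

lemma bounded_linear_endo_apply_left: "bounded_linear (\<lambda>A. endo_apply A x)"
proof (rule bounded_linear_intro[where K = "norm x"])
  show "endo_apply (A + B) x = endo_apply A x + endo_apply B x" for A B
    by (rule endo_apply_add)
  show "endo_apply (c *\<^sub>R A) x = c *\<^sub>R endo_apply A x" for c A
    by (rule endo_apply_scaleR)
  show "norm (endo_apply A x) \<le> norm A * norm x" for A
    by (simp add: endo_apply_def norm_endo.rep_eq norm_blinfun)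
qed

lemma endo_of_scaleR: "linear L \<Longrightarrow> endo_of (\<lambda>y. c *\<^sub>R L y) = c *\<^sub>R endo_of L"
  by (rule endo_eqI) (simp add: endo_apply_endo_of endo_apply_scaleR linear_compose_scale_right)

lemma lin_exp_sums:
  assumes "linear L"
  shows "(\<lambda>n. (1 / fact n) *\<^sub>R (L ^^ n) x) sums endo_apply (exp (endo_of L)) x"
proof -
  have "(\<lambda>n. endo_of L ^ n /\<^sub>R fact n) sums exp (endo_of L)"
    unfolding exp_def by (rule summable_sums[OF summable_exp_generic])
  from bounded_linear.sums[OF bounded_linear_endo_apply_left this, of x]
  show ?thesis
    using assms by (simp add: endo_apply_scaleR endo_apply_power endo_apply_endo_of divide_inverse_commute)
qed

lemma lin_exp_eq_exp: "linear L \<Longrightarrow> lin_exp L = endo_apply (exp (endo_of L))"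
  unfolding lin_exp_def by (rule ext) (rule sums_unique[OF lin_exp_sums, symmetric])

lemma lin_exp_zero: "lin_exp (\<lambda>y::'a::euclidean_space. 0) = id"
proof -
  have "endo_of (\<lambda>y::'a. 0) = 0"
    by (rule endo_eqI) (simp add: endo_apply_endo_of[OF linear_zero] endo_apply_zero)
  then show ?thesis
    by (simp add: lin_exp_eq_exp[OF linear_zero] endo_apply_one)
qed

lemma lin_exp_conjugate:
  assumes L: "linear L" "linear L'" and k: "linear k" "bij k"
    and intertwine: "\<And>y. L' (k y) = k (L y)"
  shows "lin_exp L' = k \<circ> lin_exp L \<circ> inv k"
proof
  fix z
  have power: "(L' ^^ n) (k y) = k ((L ^^ n) y)" for n y
    by (induction n) (simp_all add: intertwine)
  have "(\<lambda>n. k ((1 / fact n) *\<^sub>R (L ^^ n) (inv k z))) sums k (lin_exp L (inv k z))"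
    using bounded_linear.sums[OF linear_conv_bounded_linear[THEN iffD1, OF k(1)] lin_exp_sums[OF L(1)]]
    by (simp add: lin_exp_eq_exp[OF L(1)])
  moreover have "k ((1 / fact n) *\<^sub>R (L ^^ n) (inv k z)) = (1 / fact n) *\<^sub>R (L' ^^ n) z" for n
    using power[of n "inv k z"] k(2) by (simp add: linear_scale[OF k(1)] bij_is_surj surj_f_inv_f)
  ultimately have "(\<lambda>n. (1 / fact n) *\<^sub>R (L' ^^ n) z) sums k (lin_exp L (inv k z))"
    by simp
  then have "k (lin_exp L (inv k z)) = endo_apply (exp (endo_of L')) z"
    using lin_exp_sums[OF L(2)] by (rule sums_unique2)
  then show "lin_exp L' z = (k \<circ> lin_exp L \<circ> inv k) z"
    by (simp add: lin_exp_eq_exp[OF L(2)])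
qed

section \<open>The Lie product formula\<close>

lemma exp_scaleR_of_nat:
  fixes X :: "'a::{real_normed_algebra_1,banach}"
  shows "exp (of_nat n *\<^sub>R X) = exp X ^ n"
proof (induction n)
  case (Suc n)
  have "exp (of_nat (Suc n) *\<^sub>R X) = exp (X + of_nat n *\<^sub>R X)"
    by (simp add: algebra_simps)
  also have "\<dots> = exp X * exp (of_nat n *\<^sub>R X)"
    by (rule exp_add_commuting) (simp add: mult_scaleR_left mult_scaleR_right)
  finally show ?case using Suc by simp
qed simp

lemma norm_power_diff_le:
  fixes P Q :: "'a::real_normed_algebra_1"
  assumes P: "norm P \<le> M" and Q: "norm Q \<le> M" and "1 \<le> M"
  shows "norm (P ^ n - Q ^ n) \<le> real n * M ^ n * norm (P - Q)"
proof (induction n)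
  case (Suc n)
  have Qn: "norm (Q ^ n) \<le> M ^ n"
    by (meson Q norm_ge_zero norm_power_ineq order_trans power_mono)
  have "P ^ Suc n - Q ^ Suc n = P * (P ^ n - Q ^ n) + (P - Q) * Q ^ n"
    by (simp add: algebra_simps)
  then have "norm (P ^ Suc n - Q ^ Suc n) \<le> norm P * norm (P ^ n - Q ^ n) + norm (P - Q) * norm (Q ^ n)"
    by (metis norm_mult_ineq norm_triangle_le add_mono)
  also have "\<dots> \<le> M * (real n * M ^ n * norm (P - Q)) + norm (P - Q) * M ^ n"
    using \<open>1 \<le> M\<close> by (intro add_mono mult_mono Suc P Qn) auto
  also have "\<dots> \<le> real (Suc n) * M ^ Suc n * norm (P - Q)"
    using mult_right_mono[of "M ^ n" "M ^ Suc n" "norm (P - Q)"] \<open>1 \<le> M\<close>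
    by (simp add: algebra_simps)
  finally show ?case .
qed simp

lemma exp_product_remainder:
  fixes A B :: "'a::{real_normed_algebra_1,banach}"
  shows "((\<lambda>s. norm (exp (s *\<^sub>R A) * exp (s *\<^sub>R B) - exp (s *\<^sub>R (A + B))) / \<bar>s\<bar>) \<longlongrightarrow> 0) (at 0)"
proof -
  define f where "f s = exp (s *\<^sub>R A) * exp (s *\<^sub>R B) - exp (s *\<^sub>R (A + B))" for s :: real
  have d: "((\<lambda>s. exp (s *\<^sub>R X)) has_vector_derivative X) (at 0)" for X :: 'a
    using exp_scaleR_has_vector_derivative_right[of X 0] by simp
  have "(f has_vector_derivative exp (0 *\<^sub>R A) * B + A * exp (0 *\<^sub>R B) - (A + B)) (at 0)"
    unfolding f_def by (intro has_vector_derivative_diff has_vector_derivative_mult d)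
  then have "(f has_vector_derivative 0) (at 0)"
    by (simp add: algebra_simps)
  then show ?thesis
    unfolding has_vector_derivative_def has_derivative_iff_norm by (simp add: f_def)
qed

lemma norm_exp_product_power_diff_le:
  fixes A B :: "'a::{real_normed_algebra_1,banach}"
  assumes "s \<ge> 0"
  shows "norm ((exp (s *\<^sub>R A) * exp (s *\<^sub>R B)) ^ n - exp (s *\<^sub>R (A + B)) ^ n)
    \<le> real n * exp (s * (norm A + norm B)) ^ n
        * norm (exp (s *\<^sub>R A) * exp (s *\<^sub>R B) - exp (s *\<^sub>R (A + B)))"
proof (rule norm_power_diff_le)
  have "norm (exp (s *\<^sub>R A) * exp (s *\<^sub>R B)) \<le> exp (norm (s *\<^sub>R A)) * exp (norm (s *\<^sub>R B))"
    by (rule order_trans[OF norm_mult_ineq]) (intro mult_mono norm_exp; simp)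
  then show "norm (exp (s *\<^sub>R A) * exp (s *\<^sub>R B)) \<le> exp (s * (norm A + norm B))"
    using assms by (simp add: exp_add[symmetric] algebra_simps)
  show "norm (exp (s *\<^sub>R (A + B))) \<le> exp (s * (norm A + norm B))"
    using assms norm_exp[of "s *\<^sub>R (A + B)"]
    by (smt (verit) exp_le_cancel_iff mult_left_mono norm_scaleR norm_triangle_ineq)
  show "1 \<le> exp (s * (norm A + norm B))"
    using assms by simp
qed

lemma Lie_product_formula:
  fixes A B :: "'a::{real_normed_algebra_1,banach}"
  shows "(\<lambda>n. (exp (inverse (real (Suc n)) *\<^sub>R A) * exp (inverse (real (Suc n)) *\<^sub>R B)) ^ Suc n)
           \<longlonglongrightarrow> exp (A + B)"
proof -
  define s where "s n = inverse (real (Suc n))" for n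
  define f where "f n = exp (s n *\<^sub>R A) * exp (s n *\<^sub>R B) - exp (s n *\<^sub>R (A + B))" for n
  define C where "C = exp (norm A + norm B)"
  have "filterlim s (at 0) sequentially"
    unfolding filterlim_at s_def using LIMSEQ_inverse_real_of_nat by auto
  from filterlim_compose[OF exp_product_remainder[of A B] this]
  have remainder: "(\<lambda>n. C * (norm (f n) / \<bar>s n\<bar>)) \<longlonglongrightarrow> 0"
    unfolding f_def by (intro tendsto_mult_right_zero) (simp add: o_def)
  have bound: "norm ((exp (s n *\<^sub>R A) * exp (s n *\<^sub>R B)) ^ Suc n - exp (A + B))
      \<le> C * (norm (f n) / \<bar>s n\<bar>)" for n
  proof -
    have "exp (s n * (norm A + norm B)) ^ Suc n = C"
      unfolding C_def exp_of_nat_mult[symmetric] by (simp add: s_def)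
    moreover have "exp (s n *\<^sub>R (A + B)) ^ Suc n = exp (A + B)"
      unfolding exp_scaleR_of_nat[symmetric] by (simp add: s_def)
    ultimately have "norm ((exp (s n *\<^sub>R A) * exp (s n *\<^sub>R B)) ^ Suc n - exp (A + B))
        \<le> real (Suc n) * C * norm (f n)"
      using norm_exp_product_power_diff_le[of "s n" A B "Suc n"] by (simp add: s_def f_def)
    also have "\<dots> = C * (norm (f n) / \<bar>s n\<bar>)"
      by (simp add: s_def divide_inverse mult_ac)
    finally show ?thesis .
  qed
  have "(\<lambda>n. (exp (s n *\<^sub>R A) * exp (s n *\<^sub>R B)) ^ Suc n) \<longlonglongrightarrow> exp (A + B)"
    by (rule LIM_zero_cancel, rule Lim_null_comparison[OF always_eventually[OF allI[OF bound]] remainder])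
  then show ?thesis
    unfolding s_def .
qed

section \<open>Lie algebras and the Killing form\<close>

lemma inner_linear_Basis_expansion:
  assumes "linear f"
  shows "f (g b) \<bullet> b = (\<Sum>c\<in>Basis. (g b \<bullet> c) * (f c \<bullet> b))"
proof -
  have "f (g b) = (\<Sum>c\<in>Basis. (g b \<bullet> c) *\<^sub>R f c)"
    by (subst euclidean_representation[symmetric, of "g b"])
      (simp add: linear_sum[OF assms] linear_scale[OF assms])
  then show ?thesis by (simp add: inner_sum_left)
qed

lemma lin_trace_comp_commute:
  assumes "linear f" "linear g"
  shows "lin_trace (\<lambda>z. f (g z)) = lin_trace (\<lambda>z. g (f z))"
proof -
  have "lin_trace (\<lambda>z. f (g z)) = (\<Sum>b\<in>Basis. \<Sum>c\<in>Basis. (g b \<bullet> c) * (f c \<bullet> b))"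
    unfolding lin_trace_def using inner_linear_Basis_expansion[OF assms(1)] by simp
  also have "\<dots> = (\<Sum>c\<in>Basis. \<Sum>b\<in>Basis. (f c \<bullet> b) * (g b \<bullet> c))"
    by (subst sum.swap) (simp add: mult.commute)
  also have "\<dots> = lin_trace (\<lambda>z. g (f z))"
    unfolding lin_trace_def using inner_linear_Basis_expansion[OF assms(2)] by simp
  finally show ?thesis .
qed

lemma lin_trace_add: "lin_trace (\<lambda>z. f z + g z) = lin_trace f + lin_trace g"
  unfolding lin_trace_def by (simp add: inner_add_left sum.distrib)

lemma lin_trace_diff: "lin_trace (\<lambda>z. f z - g z) = lin_trace f - lin_trace g"
  unfolding lin_trace_def by (simp add: inner_diff_left sum_subtractf)

lemma lin_trace_scaleR: "lin_trace (\<lambda>z. c *\<^sub>R f z) = c * lin_trace f"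
  unfolding lin_trace_def by (simp add: sum_distrib_left)

locale Lie_algebra =
  fixes br :: "'g::euclidean_space \<Rightarrow> 'g \<Rightarrow> 'g"
  assumes lie_bracket: "lie_bracket br"
begin

lemma linear_bracket_right: "linear (br x)"
  using lie_bracket by (simp add: lie_bracket_def)

lemma linear_bracket_left: "linear (\<lambda>x. br x y)"
  using lie_bracket by (simp add: lie_bracket_def)

lemma bracket_add_left: "br (x + y) z = br x z + br y z"
  using linear_bracket_left[of z] by (simp add: linear_iff)

lemma bracket_add_right: "br z (x + y) = br z x + br z y"
  using linear_bracket_right[of z] by (simp add: linear_iff)

lemma bracket_scaleR_left: "br (c *\<^sub>R x) z = c *\<^sub>R br x z"
  using linear_bracket_left[of z] by (simp add: linear_iff)

lemma bracket_scaleR_right: "br z (c *\<^sub>R x) = c *\<^sub>R br z x"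
  using linear_bracket_right[of z] by (simp add: linear_iff)

lemma bracket_diff_right: "br z (x - y) = br z x - br z y"
  using linear_bracket_right[of z] by (simp add: linear_diff)

lemma bracket_self: "br x x = 0"
  using lie_bracket by (simp add: lie_bracket_def)

lemma bracket_antisym: "br y x = - br x y"
proof -
  have "0 = br (x + y) (x + y)" by (simp add: bracket_self)
  also have "\<dots> = br x x + br x y + (br y x + br y y)"
    by (simp only: bracket_add_left bracket_add_right ac_simps)
  also have "\<dots> = br x y + br y x"
    by (simp add: bracket_self)
  finally show ?thesis by (simp add: eq_neg_iff_add_eq_0 add.commute)
qed

lemma bracket_Jacobi: "br (br x y) w = br x (br y w) - br y (br x w)"
proof -
  have "br x (br y w) + br y (br w x) + br w (br x y) = 0"
    using lie_bracket by (simp add: lie_bracket_def)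
  moreover have "br y (br w x) = - br y (br x w)"
    using bracket_scaleR_right[of y "-1" "br x w"] bracket_antisym[of w x] by simp
  moreover have "br w (br x y) = - br (br x y) w"
    by (rule bracket_antisym)
  ultimately show ?thesis by (simp add: algebra_simps)
qed

lemma linear_bracket_bracket: "linear (\<lambda>w. br y (br z w))"
  using linear_compose[OF linear_bracket_right linear_bracket_right] by (simp add: o_def)

lemma killing_sym: "killing br x y = killing br y x"
  unfolding killing_def by (rule lin_trace_comp_commute[OF linear_bracket_right linear_bracket_right])

lemma killing_add_right: "killing br x (y + z) = killing br x y + killing br x z"
  unfolding killing_def by (simp add: bracket_add_left bracket_add_right lin_trace_add)

lemma killing_scaleR_right: "killing br x (c *\<^sub>R y) = c * killing br x y"
  unfolding killing_def by (simp add: bracket_scaleR_left bracket_scaleR_right lin_trace_scaleR)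

lemma killing_ad_invariant: "killing br (br x y) z = - killing br y (br x z)"
proof -
  have "killing br (br x y) z
      = lin_trace (\<lambda>w. br x (br y (br z w))) - lin_trace (\<lambda>w. br y (br x (br z w)))"
    unfolding killing_def bracket_Jacobi by (rule lin_trace_diff)
  moreover have "killing br y (br x z)
      = lin_trace (\<lambda>w. br y (br x (br z w))) - lin_trace (\<lambda>w. br y (br z (br x w)))"
    unfolding killing_def bracket_Jacobi bracket_diff_right by (rule lin_trace_diff)
  moreover have "lin_trace (\<lambda>w. br x (br y (br z w))) = lin_trace (\<lambda>w. br y (br z (br x w)))"
    by (rule lin_trace_comp_commute[OF linear_bracket_right linear_bracket_bracket])
  ultimately show ?thesis by simp
qed

lemma killing_automorphism_invariant:
  assumes k: "linear k" "bij k" "\<And>x y. k (br x y) = br (k x) (k y)"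
  shows "killing br (k x) (k y) = killing br x y"
proof -
  have k_inv: "k (inv k z) = z" "inv k (k z) = z" for z
    using k(2) by (simp_all add: bij_is_surj surj_f_inv_f bij_is_inj)
  have "linear (inv k)"
    using inj_linear_imp_inv_linear[OF k(1) bij_is_inj[OF k(2)]] .
  then have lin: "linear (\<lambda>w. br x (br y (inv k w)))"
    using linear_compose[OF _ linear_bracket_bracket] by (simp add: o_def)
  have "killing br (k x) (k y) = lin_trace (\<lambda>z. k (br x (br y (inv k z))))"
    unfolding killing_def by (metis k(3) k_inv(1))
  also have "\<dots> = lin_trace (\<lambda>z. br x (br y (inv k (k z))))"
    by (rule lin_trace_comp_commute[OF k(1) lin])
  finally show ?thesis by (simp add: killing_def k_inv(2))
qed

lemma Qform_sym: "Qform br x y = Qform br y x"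
  unfolding Qform_def by (simp add: killing_sym)

lemma linear_Qform_right: "linear (Qform br x)"
  unfolding linear_iff Qform_def by (simp add: killing_add_right killing_scaleR_right)

lemma linear_Qform_left: "linear (\<lambda>x. Qform br x y)"
proof -
  have "(\<lambda>x. Qform br x y) = Qform br y"
    by (rule ext) (rule Qform_sym)
  then show ?thesis using linear_Qform_right by simp
qed

lemma Qform_ad_invariant: "Qform br (br x y) z = - Qform br y (br x z)"
  unfolding Qform_def by (simp add: killing_ad_invariant)

lemma subspace_mcompl: "subspace (mcompl br S)"
  unfolding subspace_def mcompl_def
  by (simp add: linear_0[OF linear_Qform_right] linear_add[OF linear_Qform_right]
      linear_scale[OF linear_Qform_right])

definition ad :: "'g \<Rightarrow> 'g endo" where
  "ad X = endo_of (br X)"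

lemma endo_apply_ad: "endo_apply (ad X) = br X"
  by (simp add: ad_def endo_apply_endo_of linear_bracket_right)

lemma ad_add: "ad (X + Y) = ad X + ad Y"
  by (rule endo_eqI) (simp add: endo_apply_ad endo_apply_add bracket_add_left)

lemma ad_scaleR: "ad (c *\<^sub>R X) = c *\<^sub>R ad X"
  by (rule endo_eqI) (simp add: endo_apply_ad endo_apply_scaleR bracket_scaleR_left)

lemma ad_zero: "ad 0 = 0"
  using ad_scaleR[of 0 0] by simp

lemma linear_scaled_bracket: "linear (\<lambda>y. t *\<^sub>R br X y)"
  using linear_bracket_right by (rule linear_compose_scale_right)

lemma lin_exp_ad: "lin_exp (\<lambda>y. t *\<^sub>R br X y) = endo_apply (exp (t *\<^sub>R ad X))"
  unfolding lin_exp_eq_exp[OF linear_scaled_bracket]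
  by (simp add: ad_def endo_of_scaleR[OF linear_bracket_right])

lemma has_vector_derivative_lin_exp_ad:
  "((\<lambda>t. lin_exp (\<lambda>y. t *\<^sub>R br X y) u) has_vector_derivative br X u) (at 0)"
proof -
  have "((\<lambda>t. endo_apply (exp (t *\<^sub>R ad X)) u)
      has_vector_derivative endo_apply (exp (0 *\<^sub>R ad X) * ad X) u) (at 0)"
    by (rule bounded_linear.has_vector_derivative[OF bounded_linear_endo_apply_left
          exp_scaleR_has_vector_derivative_right])
  then show ?thesis by (simp add: lin_exp_ad endo_apply_one endo_apply_ad)
qed

end

lemma pos_def_form_eqI:
  fixes q :: "'a::real_vector \<Rightarrow> 'a \<Rightarrow> real"
  assumes "subspace V" and q_lin: "\<And>y. linear (\<lambda>x. q x y)"
    and q_pos: "\<And>x. x \<in> V \<Longrightarrow> x \<noteq> 0 \<Longrightarrow> q x x > 0"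
    and "w1 \<in> V" "w2 \<in> V" and eq: "\<And>v. v \<in> V \<Longrightarrow> q w1 v = q w2 v"
  shows "w1 = w2"
proof (rule ccontr)
  assume "w1 \<noteq> w2"
  have "w1 - w2 \<in> V" using assms by (simp add: subspace_diff)
  then have "q (w1 - w2) (w1 - w2) = 0"
    using eq by (simp add: linear_diff[OF q_lin])
  with q_pos[OF \<open>w1 - w2 \<in> V\<close>] \<open>w1 \<noteq> w2\<close> show False by simp
qed

text \<open>The map \<open>T w = (\<Sum>b\<in>B. q w b *\<^sub>R b)\<close> over a basis \<open>B\<close> of \<open>V\<close> is injective on \<open>V\<close>,
  hence onto \<open>V\<close>; the representative solves \<open>T w = (\<Sum>b\<in>B. l b *\<^sub>R b)\<close>.\<close>

lemma pos_def_form_representation: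
  fixes q :: "'a::euclidean_space \<Rightarrow> 'a \<Rightarrow> real"
  assumes V: "subspace V" and q_lin: "\<And>x. linear (q x)" and q_sym: "\<And>x y. q x y = q y x"
    and q_pos: "\<And>x. x \<in> V \<Longrightarrow> x \<noteq> 0 \<Longrightarrow> q x x > 0" and l: "linear l"
  obtains w where "w \<in> V" "\<And>v. v \<in> V \<Longrightarrow> q w v = l v"
proof -
  obtain B where B: "B \<subseteq> V" "independent B" and span_B: "span B = V"
    by (metis basis_subspace_exists[OF V])
  have coeffs_zero: "\<forall>b\<in>B. c b = 0" if "(\<Sum>b\<in>B. c b *\<^sub>R b) = 0" for c
    using B(2) that by (simp add: independent_explicit)
  have q_lin': "linear (\<lambda>x. q x y)" for y
    using q_lin[of y] by (simp only: q_sym[of _ y])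
  define T where "T w = (\<Sum>b\<in>B. q w b *\<^sub>R b)" for w
  have "linear T"
    unfolding T_def linear_iff
    by (simp add: linear_add[OF q_lin'] linear_scale[OF q_lin'] scaleR_add_left
        sum.distrib scaleR_sum_right)
  have "T ` V \<subseteq> V"
    unfolding T_def using B(1) by (auto intro!: subspace_sum[OF V] subspace_scale[OF V])
  have "inj_on T V"
  proof (rule linear_inj_on_iff_eq_0[OF \<open>linear T\<close> V, THEN iffD2], intro ballI impI)
    fix w assume "w \<in> V" "T w = 0"
    then have "\<forall>b\<in>B. q w b = 0"
      using coeffs_zero[of "q w"] by (simp add: T_def)
    then have "q w w = 0"
      using linear_eq_on_span[OF q_lin[of w] linear_zero, of B w] \<open>w \<in> V\<close> span_B by simp
    then show "w = 0" using q_pos[OF \<open>w \<in> V\<close>] by (cases "w = 0") simp_all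
  qed
  then have "dim (T ` V) = dim V"
    using dim_image_eq[OF \<open>linear T\<close>, of V] span_eq_iff[THEN iffD2, OF V] by simp
  then have T_onto: "T ` V = V"
    using subspace_dim_equal[OF linear_subspace_image[OF \<open>linear T\<close> V] V \<open>T ` V \<subseteq> V\<close>] by simp
  have "(\<Sum>b\<in>B. l b *\<^sub>R b) \<in> T ` V"
    unfolding T_onto using B(1) by (auto intro!: subspace_sum[OF V] subspace_scale[OF V])
  then obtain w where w: "(\<Sum>b\<in>B. l b *\<^sub>R b) = T w" "w \<in> V"
    by (rule imageE)
  then have "(\<Sum>b\<in>B. (q w b - l b) *\<^sub>R b) = 0"
    by (simp add: T_def scaleR_diff_left sum_subtractf)
  then have "\<forall>b\<in>B. q w b = l b"
    using coeffs_zero[of "\<lambda>b. q w b - l b"] by simp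
  then have "q w v = l v" if "v \<in> V" for v
    using linear_eq_on_span[OF q_lin[of w] l, of B v] that span_B by simp
  with w(2) show ?thesis by (rule that)
qed

locale compact_semisimple_Lie_algebra = Lie_algebra +
  assumes killing_neg_def: "x \<noteq> 0 \<Longrightarrow> killing br x x < 0"
begin

lemma Qform_pos: "x \<noteq> 0 \<Longrightarrow> Qform br x x > 0"
  using killing_neg_def by (simp add: Qform_def)

lemma Qform_eqI:
  assumes "subspace V" "w1 \<in> V" "w2 \<in> V" "\<And>v. v \<in> V \<Longrightarrow> Qform br w1 v = Qform br w2 v"
  shows "w1 = w2"
  using pos_def_form_eqI[OF assms(1) linear_Qform_left Qform_pos] assms(2-) by blast

lemma Qform_representation:
  assumes "subspace V" "linear l"
  obtains w where "w \<in> V" "\<And>v. v \<in> V \<Longrightarrow> Qform br w v = l v"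
  using pos_def_form_representation[OF assms(1) linear_Qform_right Qform_sym Qform_pos assms(2)]
  by blast

lemma metric_op_characterization:
  assumes "linear l" and fund_tensor_eq: "\<And>v. v \<in> mcompl br S \<Longrightarrow> fund_tensor F y u v = l v"
  shows "metric_op br (mcompl br S) F y u \<in> mcompl br S"
    and "\<And>v. v \<in> mcompl br S \<Longrightarrow> Qform br (metric_op br (mcompl br S) F y u) v = fund_tensor F y u v"
proof -
  let ?P = "\<lambda>w. w \<in> mcompl br S \<and> (\<forall>v\<in>mcompl br S. fund_tensor F y u v = Qform br w v)"
  obtain w where "w \<in> mcompl br S" "\<And>v. v \<in> mcompl br S \<Longrightarrow> Qform br w v = l v"
    using Qform_representation[OF subspace_mcompl \<open>linear l\<close>] by blast
  then have "?P w" using fund_tensor_eq by simp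
  moreover have "w' = w" if "?P w'" for w'
  proof (rule Qform_eqI[OF subspace_mcompl])
    show "w' \<in> mcompl br S" "w \<in> mcompl br S"
      using that \<open>?P w\<close> by simp_all
    show "Qform br w' v = Qform br w v" if "v \<in> mcompl br S" for v
      using \<open>?P w'\<close> \<open>?P w\<close> that by simp
  qed
  ultimately have "?P (metric_op br (mcompl br S) F y u)"
    unfolding metric_op_def by (rule theI)
  then show "metric_op br (mcompl br S) F y u \<in> mcompl br S"
    and "\<And>v. v \<in> mcompl br S \<Longrightarrow> Qform br (metric_op br (mcompl br S) F y u) v = fund_tensor F y u v"
    by simp_all
qed

end

section \<open>The isotropy algebra and its complement\<close>

lemma has_derivative_level_curve_zero:
  assumes "(\<gamma> has_vector_derivative v) (at 0)" "(g has_derivative g') (at (\<gamma> 0))"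
    and "\<And>t. g (\<gamma> t) = c"
  shows "g' v = 0"
proof -
  have "((\<lambda>t. g (\<gamma> t)) has_derivative (\<lambda>t. g' (t *\<^sub>R v))) (at 0)"
    using has_derivative_compose[OF assms(1)[unfolded has_vector_derivative_def] assms(2)] .
  moreover have "((\<lambda>t. g (\<gamma> t)) has_derivative (\<lambda>t. 0)) (at 0)"
    unfolding assms(3) by (rule has_derivative_const)
  ultimately have "(\<lambda>t. g' (t *\<^sub>R v)) = (\<lambda>t. 0)"
    by (rule has_derivative_unique)
  then show ?thesis by (metis scaleR_one)
qed

locale adjoint_subgroup = Lie_algebra br for br :: "'g::euclidean_space \<Rightarrow> 'g \<Rightarrow> 'g" +
  fixes AdH :: "('g \<Rightarrow> 'g) set"
  assumes closed_adjoint_subgroup: "closed_adjoint_subgroup br AdH"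
begin

abbreviation h :: "'g set" where
  "h \<equiv> lie_alg_of br AdH"

abbreviation m :: "'g set" where
  "m \<equiv> mcompl br h"

lemma id_in_AdH: "id \<in> AdH"
  using closed_adjoint_subgroup by (simp add: closed_adjoint_subgroup_def)

lemma comp_in_AdH: "k \<in> AdH \<Longrightarrow> l \<in> AdH \<Longrightarrow> k \<circ> l \<in> AdH"
  using closed_adjoint_subgroup by (simp add: closed_adjoint_subgroup_def)

lemma inv_in_AdH: "k \<in> AdH \<Longrightarrow> inv k \<in> AdH"
  using closed_adjoint_subgroup by (simp add: closed_adjoint_subgroup_def)

lemma AdH_automorphism:
  assumes "k \<in> AdH"
  shows "linear k" "bij k" "\<And>x y. k (br x y) = br (k x) (k y)"
  using closed_adjoint_subgroup assms by (simp_all add: closed_adjoint_subgroup_def)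

lemma AdH_closed:
  assumes "\<And>n. K n \<in> AdH" "linear k" "\<And>x. (\<lambda>n. K n x) \<longlonglongrightarrow> k x"
  shows "k \<in> AdH"
  using closed_adjoint_subgroup assms unfolding closed_adjoint_subgroup_def by blast

lemma power_in_AdH: "endo_apply P \<in> AdH \<Longrightarrow> endo_apply (P ^ n) \<in> AdH"
  by (induction n) (simp_all add: endo_apply_one endo_apply_mult id_in_AdH comp_in_AdH)

lemma mem_h_iff: "X \<in> h \<longleftrightarrow> (\<forall>t. endo_apply (exp (t *\<^sub>R ad X)) \<in> AdH)"
  by (simp add: lie_alg_of_def lin_exp_ad)

text \<open>This is where the closedness of \<open>Ad(H)\<close> enters, through the Lie product formula.\<close>

lemma add_in_h:
  assumes "X \<in> h" "Y \<in> h"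
  shows "X + Y \<in> h"
  unfolding mem_h_iff
proof
  fix t
  define A where "A = t *\<^sub>R ad X"
  define B where "B = t *\<^sub>R ad Y"
  define K where "K n = endo_apply
    ((exp (inverse (real (Suc n)) *\<^sub>R A) * exp (inverse (real (Suc n)) *\<^sub>R B)) ^ Suc n)" for n
  have "K n \<in> AdH" for n
    using assms unfolding K_def A_def B_def mem_h_iff scaleR_scaleR
    by (intro power_in_AdH) (simp add: endo_apply_mult comp_in_AdH)
  moreover have "(\<lambda>n. K n x) \<longlonglongrightarrow> endo_apply (exp (A + B)) x" for x
    unfolding K_def by (rule bounded_linear.tendsto[OF bounded_linear_endo_apply_left Lie_product_formula])
  ultimately have "endo_apply (exp (A + B)) \<in> AdH"
    using AdH_closed linear_endo_apply by blast
  then show "endo_apply (exp (t *\<^sub>R ad (X + Y))) \<in> AdH"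
    by (simp add: A_def B_def ad_add scaleR_add_right)
qed

lemma subspace_h: "subspace h"
  unfolding subspace_def
proof (intro conjI ballI allI)
  show "0 \<in> h"
    using id_in_AdH by (simp add: mem_h_iff ad_zero endo_apply_one)
  show "c *\<^sub>R X \<in> h" if "X \<in> h" for c X
    using that by (simp add: mem_h_iff ad_scaleR)
qed (rule add_in_h)

lemma AdH_preserves_h:
  assumes k: "k \<in> AdH" and X: "X \<in> h"
  shows "k X \<in> h"
  unfolding lie_alg_of_def
proof (intro CollectI allI)
  fix t
  have "lin_exp (\<lambda>y. t *\<^sub>R br (k X) y) = k \<circ> lin_exp (\<lambda>y. t *\<^sub>R br X y) \<circ> inv k"
    using AdH_automorphism[OF k]
    by (intro lin_exp_conjugate linear_scaled_bracket) (simp_all add: linear_scale)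
  moreover have "lin_exp (\<lambda>y. t *\<^sub>R br X y) \<in> AdH"
    using X by (simp add: lie_alg_of_def)
  ultimately show "lin_exp (\<lambda>y. t *\<^sub>R br (k X) y) \<in> AdH"
    using k by (simp add: comp_in_AdH inv_in_AdH)
qed

lemma Qform_AdH_invariant:
  assumes "k \<in> AdH"
  shows "Qform br (k x) (k y) = Qform br x y"
  unfolding Qform_def using killing_automorphism_invariant[OF AdH_automorphism[OF assms]] by simp

lemma AdH_preserves_m:
  assumes k: "k \<in> AdH" and v: "v \<in> m"
  shows "k v \<in> m"
  unfolding mcompl_def
proof (intro CollectI ballI)
  fix x assume "x \<in> h"
  then have "Qform br (inv k x) v = 0"
    using v AdH_preserves_h[OF inv_in_AdH[OF k]] by (simp add: mcompl_def)
  moreover have "k (inv k x) = x"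
    using AdH_automorphism(2)[OF k] by (simp add: bij_is_surj surj_f_inv_f)
  ultimately show "Qform br x (k v) = 0"
    using Qform_AdH_invariant[OF k, of "inv k x" v] by simp
qed

lemma lin_exp_ad_in_m:
  assumes "x \<in> h" "u \<in> m"
  shows "lin_exp (\<lambda>y. t *\<^sub>R br x y) u \<in> m"
  using assms AdH_preserves_m by (simp add: lie_alg_of_def)

lemma bracket_h_m:
  assumes "x \<in> h" "u \<in> m"
  shows "br x u \<in> m"
  unfolding mcompl_def
proof (intro CollectI ballI)
  fix y assume "y \<in> h"
  define \<gamma> where "\<gamma> t = lin_exp (\<lambda>z. t *\<^sub>R br x z) u" for t
  show "Qform br y (br x u) = 0"
  proof (rule has_derivative_level_curve_zero[where \<gamma> = \<gamma> and g = "Qform br y"])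
    show "(\<gamma> has_vector_derivative br x u) (at 0)"
      unfolding \<gamma>_def by (rule has_vector_derivative_lin_exp_ad)
    show "(Qform br y has_derivative Qform br y) (at (\<gamma> 0))"
      using linear_Qform_right
      by (simp add: linear_conv_bounded_linear bounded_linear_imp_has_derivative)
    show "Qform br y (\<gamma> t) = 0" for t
      using lin_exp_ad_in_m[OF assms] \<open>y \<in> h\<close> by (simp add: \<gamma>_def mcompl_def)
  qed
qed

end

locale compact_homogeneous_space =
  compact_semisimple_Lie_algebra br + adjoint_subgroup br AdH
  for br :: "'g::euclidean_space \<Rightarrow> 'g \<Rightarrow> 'g" and AdH
begin

lemma m_inter_h_zero:
  assumes "x \<in> m" "x \<in> h"
  shows "x = 0"
proof -
  have "Qform br x x = 0"
    using assms by (simp add: mcompl_def)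
  then show ?thesis
    by (metis Qform_pos less_irrefl)
qed

lemma mpart_decomposition: "mpart br h X \<in> m" "X - mpart br h X \<in> h"
proof -
  obtain p where p: "p \<in> h" "\<And>v. v \<in> h \<Longrightarrow> Qform br p v = Qform br X v"
    using Qform_representation[OF subspace_h linear_Qform_right[of X]] by blast
  have "X - p \<in> m"
    unfolding mcompl_def
  proof (intro CollectI ballI)
    fix x assume "x \<in> h"
    then show "Qform br x (X - p) = 0"
      using p(2) Qform_sym[of x] by (simp add: linear_diff[OF linear_Qform_right])
  qed
  moreover have "w = X - p" if "w \<in> m" "X - w \<in> h" for w
  proof -
    have "w - (X - p) \<in> h"
      using subspace_diff[OF subspace_h p(1) \<open>X - w \<in> h\<close>] by (simp add: algebra_simps)
    moreover have "w - (X - p) \<in> m"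
      using subspace_diff[OF subspace_mcompl \<open>w \<in> m\<close> \<open>X - p \<in> m\<close>] .
    ultimately show ?thesis using m_inter_h_zero[of "w - (X - p)"] by simp
  qed
  moreover have "X - (X - p) \<in> h"
    using p(1) by simp
  ultimately have "mpart br h X \<in> m \<and> X - mpart br h X \<in> h"
    unfolding mpart_def by - (rule theI[of _ "X - p"], blast+)
  then show "mpart br h X \<in> m" "X - mpart br h X \<in> h" by simp_all
qed

lemma Qform_orthogonal_h_m_zero:
  assumes "\<And>v. v \<in> m \<Longrightarrow> Qform br c v = 0" "\<And>x. x \<in> h \<Longrightarrow> Qform br c x = 0"
  shows "c = 0"
proof -
  have "Qform br c c = Qform br c (mpart br h c) + Qform br c (c - mpart br h c)"
    by (simp add: linear_diff[OF linear_Qform_right])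
  also have "\<dots> = 0"
    using assms mpart_decomposition by simp
  finally show ?thesis
    by (metis Qform_pos less_irrefl)
qed

end

section \<open>The fundamental tensor on the diagonal\<close>

lemma has_field_derivative_square_along_line:
  fixes Fe :: "'a::real_normed_vector \<Rightarrow> real"
  assumes "(Fe has_derivative f') (at u)"
  shows "((\<lambda>t. (Fe (u + t *\<^sub>R w))\<^sup>2) has_field_derivative 2 * Fe u * f' w) (at 0)"
proof -
  have "((\<lambda>t. u + t *\<^sub>R w) has_derivative (\<lambda>t. t *\<^sub>R w)) (at 0)"
    by (auto intro!: derivative_eq_intros)
  from has_derivative_compose[OF this] assms
  have "((\<lambda>t. Fe (u + t *\<^sub>R w)) has_derivative (\<lambda>t. f' (t *\<^sub>R w))) (at 0)"
    by simp
  moreover have "(\<lambda>t. f' (t *\<^sub>R w)) = (*) (f' w)"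
    using has_derivative_linear[OF assms] by (auto simp: linear_scale)
  ultimately have "((\<lambda>t. Fe (u + t *\<^sub>R w)) has_field_derivative f' w) (at 0)"
    by (simp add: has_field_derivative_def)
  from DERIV_power[OF this, of 2] show ?thesis
    by (simp add: ac_simps)
qed

text \<open>By homogeneity \<open>F(u + s u + t w) = (1 + s) F(u + (t / (1 + s)) w)\<close> for \<open>s > -1\<close>.\<close>

lemma deriv_square_homogeneous_line:
  fixes F Fe :: "'a::real_normed_vector \<Rightarrow> real"
  assumes V: "subspace V" and hom: "\<And>y c. y \<in> V \<Longrightarrow> c > 0 \<Longrightarrow> F (c *\<^sub>R y) = c * F y"
    and ext: "\<And>y. y \<in> V \<Longrightarrow> Fe y = F y" and dF: "(Fe has_derivative f') (at u)"
    and "u \<in> V" "w \<in> V" "s > -1"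
  shows "deriv (\<lambda>t. (F (u + s *\<^sub>R u + t *\<^sub>R w))\<^sup>2) 0 = (1 + s) * (2 * Fe u * f' w)"
proof -
  define \<sigma> where "\<sigma> = 1 + s"
  have "\<sigma> > 0" using \<open>s > -1\<close> by (simp add: \<sigma>_def)
  have rescale: "(\<lambda>t. (F (u + s *\<^sub>R u + t *\<^sub>R w))\<^sup>2) = (\<lambda>t. \<sigma>\<^sup>2 * (Fe (u + (t / \<sigma>) *\<^sub>R w))\<^sup>2)"
  proof
    fix t
    have "\<sigma> * (t / \<sigma>) = t"
      using \<open>\<sigma> > 0\<close> by simp
    then have "u + s *\<^sub>R u + t *\<^sub>R w = \<sigma> *\<^sub>R (u + (t / \<sigma>) *\<^sub>R w)"
      by (simp add: \<sigma>_def algebra_simps)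
    moreover have "u + (t / \<sigma>) *\<^sub>R w \<in> V"
      using V \<open>u \<in> V\<close> \<open>w \<in> V\<close> by (simp add: subspace_add subspace_scale)
    ultimately show "(F (u + s *\<^sub>R u + t *\<^sub>R w))\<^sup>2 = \<sigma>\<^sup>2 * (Fe (u + (t / \<sigma>) *\<^sub>R w))\<^sup>2"
      using hom ext \<open>\<sigma> > 0\<close> by (simp add: power_mult_distrib)
  qed
  have "((\<lambda>r. (Fe (u + r *\<^sub>R w))\<^sup>2) has_field_derivative 2 * Fe u * f' w)
      (at ((\<lambda>t. t / \<sigma>) 0))"
    using has_field_derivative_square_along_line[OF dF] by simp
  from DERIV_chain2[OF this DERIV_cdivide[OF DERIV_ident]]
  have "((\<lambda>t. \<sigma>\<^sup>2 * (Fe (u + (t / \<sigma>) *\<^sub>R w))\<^sup>2)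
      has_field_derivative \<sigma>\<^sup>2 * (2 * Fe u * f' w * (1 / \<sigma>))) (at 0)"
    by (intro DERIV_cmult) simp
  moreover have "\<sigma>\<^sup>2 * (2 * Fe u * f' w * (1 / \<sigma>)) = (1 + s) * (2 * Fe u * f' w)"
    using \<open>\<sigma> > 0\<close> by (simp add: \<sigma>_def power2_eq_square)
  ultimately show ?thesis
    unfolding rescale by (metis DERIV_imp_deriv)
qed

lemma fund_tensor_diag:
  fixes F Fe :: "'a::euclidean_space \<Rightarrow> real"
  assumes V: "subspace V" and hom: "\<And>y c. y \<in> V \<Longrightarrow> c > 0 \<Longrightarrow> F (c *\<^sub>R y) = c * F y"
    and ext: "\<And>y. y \<in> V \<Longrightarrow> Fe y = F y" and dF: "(Fe has_derivative f') (at u)"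
    and "u \<in> V" "w \<in> V"
  shows "fund_tensor F u u w = F u * f' w"
proof -
  define D where "D = 2 * Fe u * f' w"
  have "((\<lambda>s. (1 + s) * D) has_field_derivative D) (at 0)"
    by (auto intro!: derivative_eq_intros)
  then have "((\<lambda>s. deriv (\<lambda>t. (F (u + s *\<^sub>R u + t *\<^sub>R w))\<^sup>2) 0) has_field_derivative D) (at 0)"
    by (rule has_field_derivative_transform_within_open[where S = "{-1<..}"])
      (auto simp: D_def deriv_square_homogeneous_line[OF V hom ext dF \<open>u \<in> V\<close> \<open>w \<in> V\<close>])
  then have "deriv (\<lambda>s. deriv (\<lambda>t. (F (u + s *\<^sub>R u + t *\<^sub>R w))\<^sup>2) 0) 0 = D"
    by (rule DERIV_imp_deriv)
  then show ?thesis
    unfolding fund_tensor_def using ext \<open>u \<in> V\<close> by (simp add: D_def)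
qed

locale homogeneous_Finsler_space = compact_homogeneous_space br AdH
  for br :: "'g::euclidean_space \<Rightarrow> 'g \<Rightarrow> 'g" and AdH +
  fixes F :: "'g \<Rightarrow> real"
  assumes minkowski_norm: "minkowski_norm_on (mcompl br (lie_alg_of br AdH)) F"
    and F_AdH_invariant: "k \<in> AdH \<Longrightarrow> y \<in> mcompl br (lie_alg_of br AdH) \<Longrightarrow> F (k y) = F y"
begin

lemma F_homogeneous: "y \<in> m \<Longrightarrow> c > 0 \<Longrightarrow> F (c *\<^sub>R y) = c * F y"
  using minkowski_norm by (simp add: minkowski_norm_on_def)

lemma F_smooth_extension:
  assumes "u \<in> m" "u \<noteq> 0"
  obtains Fe f' where "\<And>y. y \<in> m \<Longrightarrow> Fe y = F y" "(Fe has_derivative f') (at u)"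
proof -
  obtain S Fe where S: "open S" "m - {0} \<subseteq> S" "smooth_on S Fe" and Fe: "\<forall>y\<in>m. Fe y = F y"
    using minkowski_norm unfolding minkowski_norm_on_def by blast
  have "Fe differentiable_on S"
    using S(3) unfolding smooth_on_def by (metis higher_dirderivs.simps(1) singletonI)
  moreover have "u \<in> S"
    using S(2) assms by blast
  ultimately have "Fe differentiable (at u)"
    using at_within_open[OF _ S(1)] by (metis differentiable_on_def)
  then show ?thesis
    using Fe that unfolding differentiable_def by blast
qed

text \<open>Differentiate \<open>F(exp(t ad x) u) = F(u)\<close> at \<open>t = 0\<close>.\<close>

lemma derivative_F_bracket_h_zero:
  assumes Fe: "\<And>y. y \<in> m \<Longrightarrow> Fe y = F y" and dF: "(Fe has_derivative f') (at u)"
    and "u \<in> m" "x \<in> h"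
  shows "f' (br x u) = 0"
proof (rule has_derivative_level_curve_zero[where g = Fe])
  let ?\<gamma> = "\<lambda>t. lin_exp (\<lambda>y. t *\<^sub>R br x y) u"
  show "(?\<gamma> has_vector_derivative br x u) (at 0)"
    by (rule has_vector_derivative_lin_exp_ad)
  show "(Fe has_derivative f') (at (?\<gamma> 0))"
    using dF by (simp add: lin_exp_zero)
  show "Fe (?\<gamma> t) = F u" for t
    using lin_exp_ad_in_m[OF \<open>x \<in> h\<close> \<open>u \<in> m\<close>] \<open>x \<in> h\<close> \<open>u \<in> m\<close> Fe F_AdH_invariant
    by (simp add: lie_alg_of_def)
qed

lemma metric_op_diag:
  assumes "u \<in> m" "u \<noteq> 0"
  shows "metric_op br m F u u \<in> m"
    and "\<And>v. v \<in> m \<Longrightarrow> Qform br (metric_op br m F u u) v = fund_tensor F u u v"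
proof -
  obtain Fe f' where Fe: "\<And>y. y \<in> m \<Longrightarrow> Fe y = F y" and dF: "(Fe has_derivative f') (at u)"
    using F_smooth_extension[OF assms] by blast
  have "linear (\<lambda>v. F u * f' v)"
    using has_derivative_linear[OF dF] by (simp add: linear_iff algebra_simps)
  moreover have "fund_tensor F u u v = F u * f' v" if "v \<in> m" for v
    using fund_tensor_diag[OF subspace_mcompl F_homogeneous Fe dF \<open>u \<in> m\<close> that] .
  ultimately show "metric_op br m F u u \<in> m"
    and "\<And>v. v \<in> m \<Longrightarrow> Qform br (metric_op br m F u u) v = fund_tensor F u u v"
    using metric_op_characterization by blast+
qed

lemma fund_tensor_mpart_bracket:
  assumes "u \<in> m" "u \<noteq> 0" "v \<in> m"
  shows "fund_tensor F u u (mpart br h (br u v)) = - Qform br (br u (metric_op br m F u u)) v"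
proof -
  let ?A = "metric_op br m F u u" and ?p = "mpart br h (br u v)"
  have "fund_tensor F u u ?p = Qform br ?A ?p"
    using metric_op_diag[OF assms(1,2)] mpart_decomposition by simp
  also have "\<dots> = Qform br ?A (br u v)"
  proof -
    have "Qform br (br u v - ?p) ?A = 0"
      using metric_op_diag(1)[OF assms(1,2)] mpart_decomposition(2) by (simp add: mcompl_def)
    then have "Qform br ?A (br u v - ?p) = 0"
      by (simp add: Qform_sym)
    then show ?thesis
      by (simp add: linear_diff[OF linear_Qform_right])
  qed
  also have "\<dots> = - Qform br (br u ?A) v"
    using Qform_ad_invariant[of u ?A v] by simp
  finally show ?thesis .
qed

lemma Qform_bracket_metric_op_h:
  assumes "u \<in> m" "u \<noteq> 0" "x \<in> h"
  shows "Qform br (br u (metric_op br m F u u)) x = 0"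
proof -
  let ?A = "metric_op br m F u u"
  obtain Fe f' where Fe: "\<And>y. y \<in> m \<Longrightarrow> Fe y = F y" and dF: "(Fe has_derivative f') (at u)"
    using F_smooth_extension[OF assms(1,2)] by blast
  have "Qform br (br u ?A) x = Qform br ?A (br x u)"
    using Qform_ad_invariant[of u ?A x] bracket_antisym[of u x]
    by (simp add: linear_neg[OF linear_Qform_right])
  also have "\<dots> = fund_tensor F u u (br x u)"
    using metric_op_diag(2)[OF assms(1,2) bracket_h_m[OF assms(3,1)]] .
  also have "\<dots> = F u * f' (br x u)"
    using fund_tensor_diag[OF subspace_mcompl F_homogeneous Fe dF assms(1) bracket_h_m[OF assms(3,1)]] .
  also have "\<dots> = 0"
    using derivative_F_bracket_h_zero[OF Fe dF assms(1,3)] by simp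
  finally show ?thesis .
qed

end

theorem lemma3p4:
  fixes br :: "'g::euclidean_space \<Rightarrow> 'g \<Rightarrow> 'g"
    and AdH :: "('g \<Rightarrow> 'g) set"
    and F :: "'g \<Rightarrow> real"
  assumes "lie_bracket br"
    and "\<forall>x. x \<noteq> 0 \<longrightarrow> killing br x x < 0"
    and "closed_adjoint_subgroup br AdH"
    and "minkowski_norm_on (mcompl br (lie_alg_of br AdH)) F"
    and "\<forall>k\<in>AdH. \<forall>y\<in>mcompl br (lie_alg_of br AdH). F (k y) = F y"
  shows "naturally_reductive br (lie_alg_of br AdH) F \<longleftrightarrow>
    (\<forall>u\<in>mcompl br (lie_alg_of br AdH) - {0}.
       br u (metric_op br (mcompl br (lie_alg_of br AdH)) F u u) = 0)"
proof -
  interpret homogeneous_Finsler_space br AdH F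
    using assms by unfold_locales auto
  have "naturally_reductive br h F \<longleftrightarrow>
      (\<forall>u\<in>m - {0}. \<forall>v\<in>m. Qform br (br u (metric_op br m F u u)) v = 0)"
    unfolding naturally_reductive_def by (auto simp: fund_tensor_mpart_bracket)
  also have "\<dots> \<longleftrightarrow> (\<forall>u\<in>m - {0}. br u (metric_op br m F u u) = 0)"
  proof (rule ball_cong[OF refl])
    fix u assume "u \<in> m - {0}"
    then show "(\<forall>v\<in>m. Qform br (br u (metric_op br m F u u)) v = 0)
        \<longleftrightarrow> br u (metric_op br m F u u) = 0"
      using Qform_orthogonal_h_m_zero Qform_bracket_metric_op_h
      by (auto simp: linear_0[OF linear_Qform_left])
  qed
  finally show ?thesis .
qed

end
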